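(* Let $Q=(q_n)_{n\ge1}$ be a basic sequence that is infinite in limit, let $k\in\mathbb{N}$, and let $x=E_0.E_1E_2\cdots$ (w.r.t. $Q$) be $Q$-normal of order $k$. Then there exists a real number $y=F_0.F_1F_2\cdots$ (w.r.t. $Q$) such that the set $\{n : E_n\neq F_n\}$ has natural density zero and $y\notin\bigcup_{j=1}^{\infty}\mathscr{N}_j(Q)$, i.e. $y$ is not $Q$-normal of order $j$ for any $j\ge1$.
   Context: A basic sequence is a sequence $Q=(q_n)_{n\ge1}$ of integers with $q_n\ge2$ for all $n$. The $Q$-Cantor series expansion of a real $x$ is the unique expansion $x=E_0+\sum_{n\ge1}\frac{E_n}{q_1\cdots q_n}$ with $E_0=\lfloor x\rfloor$, $E_n\in\{0,1,\dots,q_n-1\}$ for $n\ge1$, and $E_n\ne q_n-1$ for infinitely many $n$; this is written $x=E_0.E_1E_2\cdots$ w.r.t. $Q$. $Q$ is infinite in limit if $q_n\to\infty$. A block of length $k$ is a $k$-tuple $B=(b_1,\dots,b_k)$ of non-negative integers; $N_n^Q(B,x)$ denotes the number of indices $i\le n$ with $E_i=b_1,E_{i+1}=b_2,\dots,E_{i+k-1}=b_k$. Let $Q_n^{(k)}=\sum_{j=1}^n\frac{1}{q_jq_{j+1}\cdots q_{j+k-1}}$. A real $x$ is $Q$-normal of order $k$ if $\lim_{n\to\infty}N_n^Q(B,x)/Q_n^{(k)}=1$ for every block $B$ of length $k$; $\mathscr{N}_k(Q)$ denotes the set of such $x$. *)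

theory Defs
  imports "HOL-Analysis.Analysis"
begin

text \<open>A basic sequence: q_n \<ge> 2 for all n \<ge> 1 (index 0 is unused).\<close>
definition basic_seq :: "(nat \<Rightarrow> nat) \<Rightarrow> bool" where
  "basic_seq Q \<longleftrightarrow> (\<forall>n\<ge>1. Q n \<ge> 2)"

definition infinite_in_limit :: "(nat \<Rightarrow> nat) \<Rightarrow> bool" where
  "infinite_in_limit Q \<longleftrightarrow> filterlim Q at_top sequentially"

definition is_cantor_expansion :: "(nat \<Rightarrow> nat) \<Rightarrow> real \<Rightarrow> (nat \<Rightarrow> int) \<Rightarrow> bool" where
  "is_cantor_expansion Q x E \<longleftrightarrow>
     E 0 = \<lfloor>x\<rfloor> \<and>
     (\<forall>n\<ge>1. 0 \<le> E n \<and> E n \<le> int (Q n) - 1) \<and>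
     infinite {n. n \<ge> 1 \<and> E n \<noteq> int (Q n) - 1} \<and>
     (\<lambda>n. real_of_int (E (Suc n)) / (\<Prod>i=1..Suc n. real (Q i))) sums (x - real_of_int (E 0))"

definition cantor_digits :: "(nat \<Rightarrow> nat) \<Rightarrow> real \<Rightarrow> nat \<Rightarrow> int" where
  "cantor_digits Q x = (THE E. is_cantor_expansion Q x E)"

definition block_count :: "(nat \<Rightarrow> nat) \<Rightarrow> nat list \<Rightarrow> real \<Rightarrow> nat \<Rightarrow> nat" where
  "block_count Q B x n =
     card {i \<in> {1..n}. \<forall>j<length B. cantor_digits Q x (i + j) = int (B ! j)}"

definition Q_k :: "(nat \<Rightarrow> nat) \<Rightarrow> nat \<Rightarrow> nat \<Rightarrow> real" where
  "Q_k Q k n = (\<Sum>j=1..n. 1 / (\<Prod>i=j..j+k-1. real (Q i)))"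

definition Q_normal_of_order :: "(nat \<Rightarrow> nat) \<Rightarrow> nat \<Rightarrow> real \<Rightarrow> bool" where
  "Q_normal_of_order Q k x \<longleftrightarrow>
     (\<forall>B. length B = k \<longrightarrow>
        (\<lambda>n. real (block_count Q B x n) / Q_k Q k n) \<longlonglongrightarrow> 1)"

definition natural_density_zero :: "nat set \<Rightarrow> bool" where
  "natural_density_zero A \<longleftrightarrow> (\<lambda>n. real (card (A \<inter> {1..n})) / real n) \<longlonglongrightarrow> 0"

end

theory Submission
  imports Defs
begin

(* Given any real x with Q-Cantor expansion E_0.E_1E_2..., where Q is infinite in limit, we
   construct y by replacing the digits of x with 0 on a sparse union of "runs" [m l_m, (m+1) l_m).

   1. Cantor expansions: using the telescoping series of maximal digits we show that admissible
      digit sequences (digits in range, not eventually maximal) are exactly the expansions, that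
      every real has one, and that it is unique.  Hence cantor_digits returns the digits of the
      value of any admissible series, which is how y is obtained from the modified digits.
   2. Since q_n -> infinity, the expected block count Q_n^(j) <= Q_n^(1) = sum 1/q_s is o(n)
      (a Cesaro argument).
   3. The runs are chosen so long that at the end n of run m the block 0^j (j <= m) occurs more than
      2 Q_n^(j) times, so y is normal of no order; the starts grow so fast that the runs, and hence
      the positions where the digits of x and y differ, form a set of natural density zero. *)

definition qprod :: "(nat \<Rightarrow> nat) \<Rightarrow> nat \<Rightarrow> real" where
  "qprod Q n = (\<Prod>i=1..n. real (Q i))"

lemma qprod_0 [simp]: "qprod Q 0 = 1"
  by (simp add: qprod_def)

lemma qprod_Suc: "qprod Q (Suc n) = qprod Q n * real (Q (Suc n))"
  by (simp add: qprod_def)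

lemma basic_seq_ge_2: "basic_seq Q \<Longrightarrow> 1 \<le> i \<Longrightarrow> 2 \<le> real (Q i)"
  unfolding basic_seq_def by (metis of_nat_le_iff of_nat_numeral)

lemma qprod_ge_pow2:
  assumes "basic_seq Q" shows "2 ^ n \<le> qprod Q n"
proof -
  have "(\<Prod>i=1..n. 2::real) \<le> (\<Prod>i=1..n. real (Q i))"
    using basic_seq_ge_2[OF assms] by (intro prod_mono) auto
  then show ?thesis by (simp add: qprod_def)
qed

lemma qprod_pos: "basic_seq Q \<Longrightarrow> 0 < qprod Q n"
  using qprod_ge_pow2[of Q n] by (smt (verit) zero_less_power)

lemma inverse_qprod_tendsto_0:
  assumes "basic_seq Q" shows "(\<lambda>n. 1 / qprod Q n) \<longlonglongrightarrow> 0"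
proof (rule Lim_null_comparison)
  show "\<forall>\<^sub>F n in sequentially. norm (1 / qprod Q n) \<le> (1 / 2) ^ n"
  proof (intro always_eventually allI)
    fix n
    have "1 / qprod Q n \<le> 1 / 2 ^ n"
      using qprod_ge_pow2[OF assms, of n] qprod_pos[OF assms, of n] by (intro divide_left_mono) auto
    then show "norm (1 / qprod Q n) \<le> (1 / 2) ^ n"
      using qprod_pos[OF assms, of n] by (simp add: power_one_over)
  qed
  show "(\<lambda>n. (1 / 2 :: real) ^ n) \<longlonglongrightarrow> 0"
    by (rule LIMSEQ_realpow_zero) auto
qed

(* The integer E_1 q_2...q_n + ... + E_{n-1} q_n + E_n, i.e. q_1...q_n times the n-th partial sum of
   the series with digits E. *)
fun prefix_value :: "(nat \<Rightarrow> nat) \<Rightarrow> (nat \<Rightarrow> int) \<Rightarrow> nat \<Rightarrow> int" where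
  "prefix_value Q E 0 = 0"
| "prefix_value Q E (Suc n) = int (Q (Suc n)) * prefix_value Q E n + E (Suc n)"

definition cantor_term :: "(nat \<Rightarrow> nat) \<Rightarrow> (nat \<Rightarrow> int) \<Rightarrow> nat \<Rightarrow> real" where
  "cantor_term Q E t = real_of_int (E (Suc t)) / qprod Q (Suc t)"

lemma cantor_partial_sum:
  assumes "basic_seq Q"
  shows "(\<Sum>t<n. cantor_term Q E t) = real_of_int (prefix_value Q E n) / qprod Q n"
proof (induction n)
  case (Suc n)
  have "0 < qprod Q n" "0 < real (Q (Suc n))"
    using qprod_pos[OF assms] basic_seq_ge_2[OF assms, of "Suc n"] by auto
  with Suc show ?case by (simp add: cantor_term_def qprod_Suc field_simps)
qed simp

definition max_digit :: "(nat \<Rightarrow> nat) \<Rightarrow> nat \<Rightarrow> int" where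
  "max_digit Q i = int (Q i) - 1"

(* With all digits maximal the series telescopes: the tail after position n sums to
   1 / (q_1 ... q_n).  This is the basic estimate behind uniqueness and existence of expansions. *)
lemma max_digit_tail_sums:
  assumes "basic_seq Q"
  shows "(\<lambda>t. cantor_term Q (max_digit Q) (t + n)) sums (1 / qprod Q n)"
proof -
  have term_eq: "cantor_term Q (max_digit Q) t = 1 / qprod Q t - 1 / qprod Q (Suc t)" for t
    using qprod_pos[OF assms, of t] basic_seq_ge_2[OF assms, of "Suc t"]
    by (simp add: cantor_term_def max_digit_def qprod_Suc field_simps)
  have "(\<lambda>t. 1 / qprod Q (t + n)) \<longlonglongrightarrow> 0"
    using LIMSEQ_ignore_initial_segment[OF inverse_qprod_tendsto_0[OF assms]] .
  from telescope_sums'[OF this] show ?thesis by (simp add: term_eq)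
qed

definition admissible_digits :: "(nat \<Rightarrow> nat) \<Rightarrow> (nat \<Rightarrow> int) \<Rightarrow> bool" where
  "admissible_digits Q E \<longleftrightarrow>
     (\<forall>n\<ge>1. 0 \<le> E n \<and> E n \<le> max_digit Q n) \<and> infinite {n. n \<ge> 1 \<and> E n \<noteq> max_digit Q n}"

(* For admissible digits the series converges and its tail after position n lies in
   [0, 1 / (q_1 ... q_n)): it is dominated termwise by the telescoping series of maximal digits,
   strictly at some later position because infinitely many digits are not maximal. *)
lemma admissible_digits_tail:
  assumes Q: "basic_seq Q" and E: "admissible_digits Q E"
  shows "summable (\<lambda>t. cantor_term Q E (t + n))"
    and "0 \<le> (\<Sum>t. cantor_term Q E (t + n))"
    and "(\<Sum>t. cantor_term Q E (t + n)) < 1 / qprod Q n"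
proof -
  define a where "a = cantor_term Q E"
  define b where "b = cantor_term Q (max_digit Q)"
  have a_nonneg: "0 \<le> a t" for t
  proof -
    have "0 \<le> E (Suc t)" using E by (simp add: admissible_digits_def)
    then show ?thesis using qprod_pos[OF Q, of "Suc t"] by (simp add: a_def cantor_term_def)
  qed
  have a_le_b: "a t \<le> b t" for t
    using E qprod_pos[OF Q, of "Suc t"]
    by (simp add: a_def b_def cantor_term_def admissible_digits_def divide_right_mono)
  have b_sums: "(\<lambda>t. b (t + n)) sums (1 / qprod Q n)"
    using max_digit_tail_sums[OF Q] by (simp add: b_def)
  then have b_tail: "summable (\<lambda>t. b (t + n))" by (rule sums_summable)
  show a_tail: "summable (\<lambda>t. cantor_term Q E (t + n))"
    unfolding a_def[symmetric]
    by (rule summable_comparison_test'[OF b_tail]) (use a_nonneg a_le_b in auto)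
  show "0 \<le> (\<Sum>t. cantor_term Q E (t + n))"
    using a_tail a_nonneg unfolding a_def by (intro suminf_nonneg) auto
  obtain i where i: "n < i" "1 \<le> i" "E i \<noteq> max_digit Q i"
    using E unfolding admissible_digits_def infinite_nat_iff_unbounded by auto
  then obtain t where t: "i = Suc (t + n)" by (metis less_imp_Suc_add add.commute)
  have "E i < max_digit Q i"
    using E i by (simp add: admissible_digits_def order.not_eq_order_implies_strict)
  then have "a (t + n) < b (t + n)"
    using t qprod_pos[OF Q, of i] by (simp add: a_def b_def cantor_term_def divide_strict_right_mono)
  then have "0 < (\<Sum>s. b (s + n) - a (s + n))"
    using a_le_b a_tail unfolding a_def[symmetric]
    by (intro suminf_pos2[where i=t] summable_diff b_tail) auto
  then show "(\<Sum>t. cantor_term Q E (t + n)) < 1 / qprod Q n"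
    using suminf_diff[OF b_tail a_tail[folded a_def]] sums_unique[OF b_sums] by (simp add: a_def)
qed

lemma admissible_digits_floor:
  assumes Q: "basic_seq Q" and E: "admissible_digits Q E"
  shows "\<lfloor>qprod Q n * suminf (cantor_term Q E)\<rfloor> = prefix_value Q E n"
proof -
  define S where "S = (\<Sum>t. cantor_term Q E (t + n))"
  have "suminf (cantor_term Q E) = S + real_of_int (prefix_value Q E n) / qprod Q n"
    using suminf_split_initial_segment[OF summable_iff_shift[THEN iffD1, OF admissible_digits_tail(1)[OF Q E]]]
      cantor_partial_sum[OF Q] by (simp add: S_def)
  then have "qprod Q n * suminf (cantor_term Q E) = real_of_int (prefix_value Q E n) + qprod Q n * S"
    using qprod_pos[OF Q, of n] by (simp add: field_simps)
  moreover have "0 \<le> qprod Q n * S" "qprod Q n * S < 1"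
    using admissible_digits_tail(2,3)[OF Q E, of n] qprod_pos[OF Q, of n]
    by (auto simp: S_def field_simps)
  ultimately show ?thesis by (simp add: floor_eq_iff)
qed

lemma cantor_expansion_iff_series:
  "is_cantor_expansion Q x E \<longleftrightarrow>
     E 0 = \<lfloor>x\<rfloor> \<and> admissible_digits Q E \<and> cantor_term Q E sums (x - real_of_int (E 0))"
proof -
  have "cantor_term Q E = (\<lambda>n. real_of_int (E (Suc n)) / (\<Prod>i=1..Suc n. real (Q i)))"
    by (simp add: fun_eq_iff cantor_term_def qprod_def)
  then show ?thesis
    unfolding is_cantor_expansion_def admissible_digits_def max_digit_def by auto
qed

(* Expansions are unique: all prefix values, hence all digits, are determined by x. *)
lemma cantor_expansion_unique:
  assumes Q: "basic_seq Q" and "is_cantor_expansion Q x E" and "is_cantor_expansion Q x E'"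
  shows "E = E'"
proof
  fix n
  have E0: "E 0 = E' 0" and E: "admissible_digits Q E" and E': "admissible_digits Q E'"
    and sums: "cantor_term Q E sums (x - E 0)" "cantor_term Q E' sums (x - E' 0)"
    using assms(2,3) by (auto simp: cantor_expansion_iff_series)
  have prefix_eq: "prefix_value Q E m = prefix_value Q E' m" for m
    using admissible_digits_floor[OF Q E, of m] admissible_digits_floor[OF Q E', of m]
      sums E0 by (simp add: sums_iff)
  show "E n = E' n"
  proof (cases n)
    case (Suc m)
    then show ?thesis using prefix_eq[of "Suc m"] prefix_eq[of m] by simp
  qed (use E0 in simp)
qed

lemma cantor_digits_eqI:
  "basic_seq Q \<Longrightarrow> is_cantor_expansion Q x E \<Longrightarrow> cantor_digits Q x = E"
  unfolding cantor_digits_def by (blast intro: the_equality cantor_expansion_unique)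

lemma admissible_digits_expansion:
  assumes Q: "basic_seq Q" and F: "admissible_digits Q F"
  shows "is_cantor_expansion Q (real_of_int (F 0) + suminf (cantor_term Q F)) F"
proof -
  have "\<lfloor>suminf (cantor_term Q F)\<rfloor> = 0"
    using admissible_digits_floor[OF Q F, of 0] by simp
  then have "\<lfloor>real_of_int (F 0) + suminf (cantor_term Q F)\<rfloor> = F 0" by simp
  then show ?thesis
    using F summable_sums[OF admissible_digits_tail(1)[OF Q F, of 0, simplified]]
    by (simp add: cantor_expansion_iff_series)
qed

lemma floor_mult_bounds:
  fixes t :: real and q :: nat
  assumes "0 < q"
  shows "int q * \<lfloor>t\<rfloor> \<le> \<lfloor>real q * t\<rfloor>" and "\<lfloor>real q * t\<rfloor> \<le> int q * \<lfloor>t\<rfloor> + int q - 1"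
proof -
  show "int q * \<lfloor>t\<rfloor> \<le> \<lfloor>real q * t\<rfloor>"
    using assms by (simp add: le_floor_iff mult_left_mono)
  have "real q * t < real q * (real_of_int \<lfloor>t\<rfloor> + 1)"
    using assms by (intro mult_strict_left_mono) auto
  then have "\<lfloor>real q * t\<rfloor> < int q * (\<lfloor>t\<rfloor> + 1)"
    by (simp add: floor_less_iff)
  then show "\<lfloor>real q * t\<rfloor> \<le> int q * \<lfloor>t\<rfloor> + int q - 1" by (simp add: algebra_simps)
qed

lemma floor_scaled_tendsto:
  assumes Q: "basic_seq Q"
  shows "(\<lambda>n. real_of_int \<lfloor>qprod Q n * u\<rfloor> / qprod Q n) \<longlonglongrightarrow> u"
proof (rule tendsto_sandwich[of "\<lambda>n. u - 1 / qprod Q n" _ _ "\<lambda>n. u"])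
  have pos: "0 < qprod Q n" for n using qprod_pos[OF Q] .
  show "\<forall>\<^sub>F n in sequentially. u - 1 / qprod Q n \<le> real_of_int \<lfloor>qprod Q n * u\<rfloor> / qprod Q n"
  proof (intro always_eventually allI)
    fix n
    have "(qprod Q n * u - 1) / qprod Q n \<le> real_of_int \<lfloor>qprod Q n * u\<rfloor> / qprod Q n"
      using pos[of n] by (intro divide_right_mono) linarith+
    then show "u - 1 / qprod Q n \<le> real_of_int \<lfloor>qprod Q n * u\<rfloor> / qprod Q n"
      using pos[of n] by (simp add: diff_divide_distrib)
  qed
  show "\<forall>\<^sub>F n in sequentially. real_of_int \<lfloor>qprod Q n * u\<rfloor> / qprod Q n \<le> u"
    using pos by (intro always_eventually allI) (simp add: field_simps)
  show "(\<lambda>n. u - 1 / qprod Q n) \<longlonglongrightarrow> u"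
    using tendsto_diff[OF tendsto_const inverse_qprod_tendsto_0[OF Q], of u] by simp
qed simp

(* Greedy digits are never eventually maximal: if all digits after position N were maximal, the
   tail would equal 1 / (q_1 ... q_N) and the scaled value at position N would be the integer
   floor + 1, which is impossible. *)
lemma greedy_digits_not_eventually_max:
  assumes Q: "basic_seq Q" and sums: "cantor_term Q E sums u"
    and prefix: "\<And>n. prefix_value Q E n = \<lfloor>qprod Q n * u\<rfloor>"
  shows "infinite {n. n \<ge> 1 \<and> E n \<noteq> max_digit Q n}"
proof
  assume "finite {n. n \<ge> 1 \<and> E n \<noteq> max_digit Q n}"
  then obtain N where N_bound: "\<forall>n\<in>{n. n \<ge> 1 \<and> E n \<noteq> max_digit Q n}. n \<le> N"
    by (auto simp: finite_nat_set_iff_bounded_le)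
  have N: "E n = max_digit Q n" if "N < n" for n
    using N_bound[rule_format, of n] that by auto
  have "cantor_term Q E (t + N) = cantor_term Q (max_digit Q) (t + N)" for t
    by (simp add: cantor_term_def N)
  then have "(\<lambda>t. cantor_term Q E (t + N)) sums (1 / qprod Q N)"
    using max_digit_tail_sums[OF Q] by simp
  moreover have "(\<lambda>t. cantor_term Q E (t + N)) sums (u - real_of_int \<lfloor>qprod Q N * u\<rfloor> / qprod Q N)"
    using sums_split_initial_segment[OF sums] cantor_partial_sum[OF Q] prefix by simp
  ultimately have "1 / qprod Q N = u - real_of_int \<lfloor>qprod Q N * u\<rfloor> / qprod Q N"
    by (rule sums_unique2)
  then have "qprod Q N * u = real_of_int \<lfloor>qprod Q N * u\<rfloor> + 1"
    using qprod_pos[OF Q, of N] by (simp add: field_simps)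
  then show False by linarith
qed

(* Every real number has an expansion, computed greedily from the floors of (q_1 ... q_n) times
   the fractional part u of x. *)
lemma cantor_expansion_exists:
  assumes Q: "basic_seq Q"
  shows "\<exists>E. is_cantor_expansion Q x E"
proof -
  define u where "u = x - real_of_int \<lfloor>x\<rfloor>"
  define A where "A n = \<lfloor>qprod Q n * u\<rfloor>" for n
  define E where "E n = (if n = 0 then \<lfloor>x\<rfloor> else A n - int (Q n) * A (n - 1))" for n
  have u: "0 \<le> u" "u < 1" unfolding u_def by linarith+
  have prefix_A: "prefix_value Q E n = A n" for n
    by (induction n) (use u in \<open>simp_all add: A_def E_def floor_eq_iff\<close>)
  have digits: "0 \<le> E n \<and> E n \<le> max_digit Q n" if n: "1 \<le> n" for n
  proof -
    obtain m where m: "n = Suc m" using n by (cases n) auto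
    have "A n = \<lfloor>real (Q n) * (qprod Q m * u)\<rfloor>"
      by (simp add: A_def m qprod_Suc algebra_simps)
    moreover have "0 < Q n" using basic_seq_ge_2[OF Q n] by simp
    ultimately show ?thesis
      using floor_mult_bounds[of "Q n" "qprod Q m * u"]
      by (simp add: E_def A_def m max_digit_def)
  qed
  have sums: "cantor_term Q E sums u"
    using floor_scaled_tendsto[OF Q, of u]
    by (simp add: sums_def cantor_partial_sum[OF Q] prefix_A A_def)
  have "is_cantor_expansion Q x E"
    using digits sums greedy_digits_not_eventually_max[OF Q sums] prefix_A
    by (simp add: cantor_expansion_iff_series admissible_digits_def E_def u_def A_def)
  then show ?thesis by blast
qed

lemma cesaro_mean_tendsto_0:
  fixes a :: "nat \<Rightarrow> real"
  assumes "a \<longlonglongrightarrow> 0"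
  shows "(\<lambda>n. (\<Sum>s=1..n. a s) / real n) \<longlonglongrightarrow> 0"
proof (rule LIMSEQ_I)
  fix r :: real assume r: "0 < r"
  obtain G where G: "\<And>s. G \<le> s \<Longrightarrow> \<bar>a s\<bar> < r / 2"
    using LIMSEQ_D[OF assms, of "r / 2"] r by auto
  define C where "C = (\<Sum>s<G. \<bar>a s\<bar>)"
  obtain N :: nat where N: "2 * C / r < real N" using reals_Archimedean2 by blast
  have "norm ((\<Sum>s=1..n. a s) / real n - 0) < r" if n: "Suc N \<le> n" for n
  proof -
    have "\<bar>a s\<bar> \<le> (if s < G then \<bar>a s\<bar> else 0) + r / 2" for s
      using G[of s] r by auto
    then have "(\<Sum>s=1..n. \<bar>a s\<bar>) \<le> (\<Sum>s=1..n. (if s < G then \<bar>a s\<bar> else 0) + r / 2)"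
      by (intro sum_mono)
    also have "\<dots> = (\<Sum>s\<in>{1..n} \<inter> {..<G}. \<bar>a s\<bar>) + real n * r / 2"
      by (simp add: sum.distrib sum.If_cases lessThan_def)
    also have "(\<Sum>s\<in>{1..n} \<inter> {..<G}. \<bar>a s\<bar>) \<le> C"
      unfolding C_def by (intro sum_mono2) auto
    finally have "\<bar>\<Sum>s=1..n. a s\<bar> \<le> C + real n * r / 2"
      using sum_abs[of a "{1..n}"] by linarith
    moreover have "2 * C < real N * r" using N r by (simp add: field_simps)
    then have "2 * C < real n * r"
      using n r by (smt (verit) Suc_le_lessD mult_strict_right_mono of_nat_less_iff)
    ultimately have "\<bar>\<Sum>s=1..n. a s\<bar> < real n * r" by linarith
    then show ?thesis using n by (simp add: field_simps)
  qed
  then show "\<exists>N. \<forall>n\<ge>N. norm ((\<Sum>s=1..n. a s) / real n - 0) < r" by blast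
qed

lemma Q_k_pos:
  assumes Q: "basic_seq Q" and n: "1 \<le> n"
  shows "0 < Q_k Q j n"
  unfolding Q_k_def
proof (rule sum_pos)
  fix s assume s: "s \<in> {1..n}"
  have "0 < (\<Prod>i=s..s+j-1. real (Q i))"
  proof (rule prod_pos)
    fix i assume "i \<in> {s..s+j-1}"
    with s have "1 \<le> i" by auto
    from basic_seq_ge_2[OF Q this] show "0 < real (Q i)" by simp
  qed
  then show "0 < 1 / (\<Prod>i=s..s+j-1. real (Q i))" by simp
qed (use n in auto)

(* Longer blocks are rarer: Q_n^(j) <= Q_n^(1) for j >= 1, since q_s is a factor of the block
   product and all other factors are at least 1. *)
lemma Q_k_le_Q_k_1:
  assumes Q: "basic_seq Q" and j: "1 \<le> j"
  shows "Q_k Q j n \<le> Q_k Q 1 n"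
  unfolding Q_k_def
proof (rule sum_mono)
  fix s assume s: "s \<in> {1..n}"
  have "1 \<le> (\<Prod>i=Suc s..s+j-1. real (Q i))"
  proof (rule prod_ge_1)
    fix i assume "i \<in> {Suc s..s+j-1}"
    then have "1 \<le> i" by auto
    from basic_seq_ge_2[OF Q this] show "1 \<le> real (Q i)" by simp
  qed
  moreover have "0 < real (Q s)" using basic_seq_ge_2[OF Q, of s] s by auto
  ultimately have "real (Q s) \<le> real (Q s) * (\<Prod>i=Suc s..s+j-1. real (Q i))"
    by simp
  also have "\<dots> = (\<Prod>i=s..s+j-1. real (Q i))"
    using j by (intro prod.atLeast_Suc_atMost[symmetric]) auto
  finally show "1 / (\<Prod>i=s..s+j-1. real (Q i)) \<le> 1 / (\<Prod>i=s..s+1-1. real (Q i))"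
    using \<open>0 < real (Q s)\<close> by (simp add: divide_left_mono)
qed

lemma Q_k_1_sublinear:
  assumes "infinite_in_limit Q"
  shows "(\<lambda>n. Q_k Q 1 n / real n) \<longlonglongrightarrow> 0"
proof -
  have "filterlim (\<lambda>s. real (Q s)) at_top sequentially"
    using assms unfolding infinite_in_limit_def
    by (rule filterlim_compose[OF filterlim_real_sequentially])
  then have "(\<lambda>s. 1 / real (Q s)) \<longlonglongrightarrow> 0"
    by (intro tendsto_divide_0[OF tendsto_const] filterlim_at_top_imp_at_infinity)
  from cesaro_mean_tendsto_0[OF this] show ?thesis by (simp add: Q_k_def)
qed

(* Consecutive starts grow by a factor m + 1, so each run
   is short compared with its position (ratio 1/m) and the union of all runs has density zero. *)
fun run_len :: "(nat \<Rightarrow> nat) \<Rightarrow> nat \<Rightarrow> nat" where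
  "run_len T 0 = 0"
| "run_len T (Suc m) = m * run_len T m + T (Suc m) + 1"

definition run_start :: "(nat \<Rightarrow> nat) \<Rightarrow> nat \<Rightarrow> nat" where
  "run_start T m = m * run_len T m"

definition run :: "(nat \<Rightarrow> nat) \<Rightarrow> nat \<Rightarrow> nat set" where
  "run T m = {run_start T m..<run_start T m + run_len T m}"

definition sparse_runs :: "(nat \<Rightarrow> nat) \<Rightarrow> nat set" where
  "sparse_runs T = (\<Union>m. run T m)"

lemma run_len_gt: "1 \<le> m \<Longrightarrow> T m < run_len T m"
  by (cases m) auto

lemma run_len_le_start: "run_len T m \<le> run_start T m"
  by (cases m) (auto simp: run_start_def)

lemma run_start_Suc: "run_start T (Suc m) = Suc m * (run_start T m + T (Suc m) + 1)"
  by (simp add: run_start_def algebra_simps)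

lemma run_start_Suc_ge: "Suc m * run_start T m \<le> run_start T (Suc m)"
  unfolding run_start_Suc by (intro mult_le_mono2) simp

lemma strict_mono_run_start: "strict_mono (run_start T)"
  unfolding strict_mono_Suc_iff by (auto simp: run_start_def)

lemma run_start_ge: "m \<le> run_start T m"
  by (rule strict_mono_imp_increasing[OF strict_mono_run_start])

lemma run_start_index:
  "\<exists>p. run_start T p \<le> n \<and> n < run_start T (Suc p)"
proof -
  have "n < run_start T (Suc n)" using run_start_ge[of "Suc n" T] by simp
  moreover have "\<not> n < run_start T 0" by (simp add: run_start_def)
  ultimately obtain p where "\<forall>i\<le>p. \<not> n < run_start T i" "n < run_start T (Suc p)"
    using ex_least_nat_less[of "\<lambda>p. n < run_start T p"] by blast
  then show ?thesis by (auto simp: not_less)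
qed

lemma sparse_runs_below:
  "sparse_runs T \<inter> {..<run_start T (Suc (Suc m))} \<subseteq> {..<2 * run_start T m} \<union> run T (Suc m)"
proof
  fix i assume "i \<in> sparse_runs T \<inter> {..<run_start T (Suc (Suc m))}"
  then obtain p where i: "i \<in> run T p" "i < run_start T (Suc (Suc m))"
    by (auto simp: sparse_runs_def)
  have mono: "run_start T a \<le> run_start T b" if "a \<le> b" for a b
    using strict_mono_run_start that by (simp add: strict_mono_less_eq)
  consider "p \<le> m" | "p = Suc m" | "Suc (Suc m) \<le> p" by linarith
  then show "i \<in> {..<2 * run_start T m} \<union> run T (Suc m)"
  proof cases
    case 1
    then have "i < 2 * run_start T p" using i(1) run_len_le_start[of T p] by (simp add: run_def)
    also have "\<dots> \<le> 2 * run_start T m" using mono[OF 1] by simp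
    finally show ?thesis by simp
  next
    case 3
    then show ?thesis using i mono[OF 3] by (simp add: run_def)
  qed (use i in simp)
qed

lemma card_sparse_runs_le:
  assumes "run_start T (Suc m) \<le> n" "n < run_start T (Suc (Suc m))"
  shows "real (card (sparse_runs T \<inter> {1..n})) \<le> 3 * real n / real (Suc m)"
proof -
  have "sparse_runs T \<inter> {1..n} \<subseteq> {..<2 * run_start T m} \<union> run T (Suc m)"
    using sparse_runs_below[of T m] assms(2) by auto
  then have "card (sparse_runs T \<inter> {1..n}) \<le> card ({..<2 * run_start T m} \<union> run T (Suc m))"
    by (intro card_mono) (auto simp: run_def)
  also have "\<dots> \<le> 2 * run_start T m + run_len T (Suc m)"
    using card_Un_le[of "{..<2 * run_start T m}" "run T (Suc m)"] by (simp add: run_def)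
  finally have card_le: "real (card (sparse_runs T \<inter> {1..n})) \<le> 2 * real (run_start T m) + real (run_len T (Suc m))"
    by linarith
  have "real (Suc m) * real (run_start T m) \<le> real n"
    using run_start_Suc_ge[of m T] assms(1) by (metis le_trans of_nat_le_iff of_nat_mult)
  moreover have "real (Suc m) * real (run_len T (Suc m)) \<le> real n"
    using assms(1) by (metis run_start_def of_nat_le_iff of_nat_mult)
  moreover have "real (Suc m) * real (card (sparse_runs T \<inter> {1..n}))
      \<le> real (Suc m) * (2 * real (run_start T m) + real (run_len T (Suc m)))"
    using card_le by (intro mult_left_mono) auto
  ultimately have "real (Suc m) * real (card (sparse_runs T \<inter> {1..n})) \<le> 3 * real n"
    by (simp only: distrib_left)
  then show ?thesis by (simp add: field_simps del: of_nat_Suc run_len.simps)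
qed

lemma sparse_runs_density_zero: "natural_density_zero (sparse_runs T)"
  unfolding natural_density_zero_def
proof (rule LIMSEQ_I)
  fix r :: real assume r: "0 < r"
  obtain M :: nat where M: "3 / r < real M" "1 \<le> M"
    using reals_Archimedean2[of "3 / r"] by (metis max.cobounded1 max.cobounded2 of_nat_le_iff order.strict_trans2 of_nat_max)
  have "norm (real (card (sparse_runs T \<inter> {1..n})) / real n - 0) < r"
    if n: "run_start T M \<le> n" for n
  proof -
    obtain p where p: "run_start T p \<le> n" "n < run_start T (Suc p)"
      using run_start_index by blast
    have "M \<le> p"
    proof (rule ccontr)
      assume "\<not> M \<le> p"
      then have "run_start T (Suc p) \<le> run_start T M"
        using strict_mono_run_start by (simp add: strict_mono_less_eq)
      then show False using n p by simp
    qed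
    then obtain m where m: "p = Suc m" using M by (cases p) auto
    have n_pos: "0 < real n" using n M run_start_ge[of M T] by simp
    have "real (card (sparse_runs T \<inter> {1..n})) \<le> 3 * real n / real p"
      using card_sparse_runs_le[of T m n] p m by simp
    also have "\<dots> \<le> 3 * real n / real M"
      using \<open>M \<le> p\<close> M n_pos by (intro divide_left_mono) auto
    also have "\<dots> < r * real n" using M r n_pos by (simp add: field_simps)
    finally show ?thesis using n_pos by (simp add: field_simps)
  qed
  then show "\<exists>N. \<forall>n\<ge>N. norm (real (card (sparse_runs T \<inter> {1..n})) / real n - 0) < r" by blast
qed

lemma zero_block_count:
  fixes F :: "nat \<Rightarrow> int"
  assumes zero: "\<And>i. i \<in> {a..<b} \<Longrightarrow> F i = 0" and "1 \<le> a" "1 \<le> j" "a + j \<le> b"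
  shows "b - a - j + 1 \<le> card {i \<in> {1..b - 1}. \<forall>t<j. F (i + t) = 0}"
proof -
  have "{a..b - j} \<subseteq> {i \<in> {1..b - 1}. \<forall>t<j. F (i + t) = 0}"
    using assms by (auto intro!: zero)
  then have "card {a..b - j} \<le> card {i \<in> {1..b - 1}. \<forall>t<j. F (i + t) = 0}"
    by (intro card_mono) auto
  then show ?thesis using assms(4) by simp
qed

lemma Q_k_nonneg: "0 \<le> Q_k Q j n"
  by (simp add: Q_k_def sum_nonneg prod_nonneg)

(* Thresholds making the runs long enough: beyond T m the expected count Q_n^(1) is at most
   n / (4 (m + 1)), and T m >= 2 m so that blocks of length j <= m fit into run m with room to spare. *)
definition run_threshold :: "(nat \<Rightarrow> nat) \<Rightarrow> (nat \<Rightarrow> nat) \<Rightarrow> bool" where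
  "run_threshold Q T \<longleftrightarrow>
     (\<forall>m\<ge>1. 2 * m \<le> T m \<and> (\<forall>n\<ge>T m. Q_k Q 1 n \<le> real n / (4 * real (Suc m))))"

(* Suitable thresholds exist when Q is infinite in limit, by sublinearity of Q_n^(1). *)
lemma run_threshold_exists:
  assumes "infinite_in_limit Q"
  shows "\<exists>T. run_threshold Q T"
proof -
  have "\<exists>N. \<forall>n\<ge>N. Q_k Q 1 n \<le> real n / (4 * real (Suc m))" for m
  proof -
    obtain N where N: "\<And>n. N \<le> n \<Longrightarrow> \<bar>Q_k Q 1 n / real n\<bar> < 1 / (4 * real (Suc m))"
      using LIMSEQ_D[OF Q_k_1_sublinear[OF assms], of "1 / (4 * real (Suc m))"] by auto
    have "Q_k Q 1 n \<le> real n / (4 * real (Suc m))" if "max N 1 \<le> n" for n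
      using N[of n] that Q_k_nonneg[of Q 1 n] by (simp add: field_simps)
    then show ?thesis by blast
  qed
  then obtain N where N: "\<And>m n. N m \<le> n \<Longrightarrow> Q_k Q 1 n \<le> real n / (4 * real (Suc m))"
    by metis
  have "run_threshold Q (\<lambda>m. max (2 * m) (N m))"
    unfolding run_threshold_def using N by auto
  then show ?thesis by blast
qed

lemma zero_runs_block_count:
  fixes F :: "nat \<Rightarrow> int"
  assumes Q: "basic_seq Q" and T: "run_threshold Q T"
    and zero: "\<And>i. i \<in> sparse_runs T \<Longrightarrow> F i = 0"
    and j: "1 \<le> j" "j \<le> m"
  defines "n \<equiv> run_start T m + run_len T m - 1"
  shows "2 * Q_k Q j n < real (card {i \<in> {1..n}. \<forall>t<j. F (i + t) = 0})" and "m \<le> n"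
proof -
  define l where "l = run_len T m"
  have m: "1 \<le> m" using j by simp
  have l: "T m < l" "2 * m \<le> T m"
    using run_len_gt[OF m] T m by (auto simp: l_def run_threshold_def)
  have start: "run_start T m = m * l" by (simp add: run_start_def l_def)
  have n_eq: "n = m * l + l - 1" by (simp add: n_def start l_def)
  show "m \<le> n" using l n_eq m by (simp add: trans_le_add2)
  have zero_run: "F i = 0" if "i \<in> {m * l..<m * l + l}" for i
  proof -
    have "i \<in> run T m" using that by (simp add: run_def start l_def)
    then show ?thesis by (intro zero) (auto simp: sparse_runs_def)
  qed
  have "1 \<le> m * l" using m l by simp
  have "m * l + l - m * l - j + 1 \<le> card {i \<in> {1..m * l + l - 1}. \<forall>t<j. F (i + t) = 0}"
    by (rule zero_block_count) (use zero_run m l j in auto)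
  then have "l - j + 1 \<le> card {i \<in> {1..n}. \<forall>t<j. F (i + t) = 0}"
    by (simp add: n_eq)
  then have count: "real l - real m + 1 \<le> real (card {i \<in> {1..n}. \<forall>t<j. F (i + t) = 0})"
    using j l by linarith
  have "T m \<le> n" using l(1) n_eq by linarith
  then have "Q_k Q 1 n \<le> real n / (4 * real (Suc m))"
    using T m unfolding run_threshold_def by blast
  also have "\<dots> < real l / 4"
  proof -
    have "real n < real (Suc m) * real l" using n_eq l by (simp add: algebra_simps)
    then show ?thesis by (simp add: field_simps)
  qed
  finally have "2 * Q_k Q j n < real l / 2"
    using Q_k_le_Q_k_1[OF Q j(1), of n] by linarith
  also have "\<dots> \<le> real l - real m + 1" using l by linarith
  finally show "2 * Q_k Q j n < real (card {i \<in> {1..n}. \<forall>t<j. F (i + t) = 0})"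
    using count by linarith
qed

(* Hence no expansion vanishing on the runs is normal of any order: the normalised block count of
   0^j exceeds 2 at the end of every run m >= j. *)
lemma zero_runs_not_normal:
  assumes Q: "basic_seq Q" and T: "run_threshold Q T"
    and zero: "\<And>i. i \<in> sparse_runs T \<Longrightarrow> cantor_digits Q y i = 0" and j: "1 \<le> j"
  shows "\<not> Q_normal_of_order Q j y"
proof
  assume "Q_normal_of_order Q j y"
  then have "(\<lambda>n. real (block_count Q (replicate j 0) y n) / Q_k Q j n) \<longlonglongrightarrow> 1"
    unfolding Q_normal_of_order_def by simp
  from LIMSEQ_D[OF this, of 1] obtain N
    where N: "\<And>n. N \<le> n \<Longrightarrow> real (block_count Q (replicate j 0) y n) / Q_k Q j n < 2"
    by (auto simp: abs_less_iff)
  define m where "m = max j N"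
  define n where "n = run_start T m + run_len T m - 1"
  note count = zero_runs_block_count[where F = "cantor_digits Q y" and m = m, OF Q T zero j(1), folded n_def]
  have "N \<le> n" "1 \<le> n" using count(2) j by (auto simp: m_def)
  have "block_count Q (replicate j 0) y n = card {i \<in> {1..n}. \<forall>t<j. cantor_digits Q y (i + t) = 0}"
    by (simp add: block_count_def)
  then have "2 \<le> real (block_count Q (replicate j 0) y n) / Q_k Q j n"
    using count(1) Q_k_pos[OF Q \<open>1 \<le> n\<close>, of j] by (simp add: m_def field_simps)
  with N[OF \<open>N \<le> n\<close>] show False by linarith
qed

(* Setting digits to zero on any set keeps a digit sequence admissible, since 0 is never the maximal
   digit. *)
lemma admissible_digits_zero_on:
  assumes Q: "basic_seq Q" and E: "admissible_digits Q E"
  shows "admissible_digits Q (\<lambda>n. if n \<in> S then 0 else E n)"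
proof -
  have max_pos: "0 < max_digit Q n" if "1 \<le> n" for n
    using basic_seq_ge_2[OF Q that] by (simp add: max_digit_def)
  have "{n. 1 \<le> n \<and> E n \<noteq> max_digit Q n}
          \<subseteq> {n. 1 \<le> n \<and> (if n \<in> S then 0 else E n) \<noteq> max_digit Q n}"
  proof (intro subsetI)
    fix n assume "n \<in> {n. 1 \<le> n \<and> E n \<noteq> max_digit Q n}"
    then show "n \<in> {n. 1 \<le> n \<and> (if n \<in> S then 0 else E n) \<noteq> max_digit Q n}"
      using max_pos[of n] by (cases "n \<in> S") auto
  qed
  then have "infinite {n. 1 \<le> n \<and> (if n \<in> S then 0 else E n) \<noteq> max_digit Q n}"
    using E infinite_super unfolding admissible_digits_def by blast
  moreover have "\<forall>n\<ge>1. 0 \<le> (if n \<in> S then 0 else E n) \<and> (if n \<in> S then 0 else E n) \<le> max_digit Q n"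
    using E max_pos by (auto simp: admissible_digits_def less_imp_le)
  ultimately show ?thesis unfolding admissible_digits_def by blast
qed

lemma natural_density_zero_subset:
  assumes "natural_density_zero A" "B \<subseteq> A"
  shows "natural_density_zero B"
  unfolding natural_density_zero_def
proof (rule tendsto_sandwich[of "\<lambda>n. 0" _ _ "\<lambda>n. real (card (A \<inter> {1..n})) / real n"])
  have "card (B \<inter> {1..n}) \<le> card (A \<inter> {1..n})" for n
    using assms(2) by (intro card_mono) auto
  then show "\<forall>\<^sub>F n in sequentially. real (card (B \<inter> {1..n})) / real n \<le> real (card (A \<inter> {1..n})) / real n"
    by (intro always_eventually allI divide_right_mono) auto
qed (use assms(1) in \<open>auto simp: natural_density_zero_def\<close>)

theorem theorem3p1:
  fixes Q :: "nat \<Rightarrow> nat" and k :: nat and x :: real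
  assumes "basic_seq Q" and "infinite_in_limit Q" and "k \<ge> 1"
    and "Q_normal_of_order Q k x"
  shows "\<exists>y::real.
           natural_density_zero {n. cantor_digits Q x n \<noteq> cantor_digits Q y n} \<and>
           (\<forall>j\<ge>1. \<not> Q_normal_of_order Q j y)"
proof -
  note Q = assms(1)
  obtain E where x: "is_cantor_expansion Q x E" using cantor_expansion_exists[OF Q] by blast
  obtain T where T: "run_threshold Q T" using run_threshold_exists[OF assms(2)] by blast
  define F where "F n = (if n \<in> sparse_runs T then 0 else E n)" for n
  have F: "admissible_digits Q F"
    unfolding F_def by (rule admissible_digits_zero_on[OF Q]) (use x in \<open>simp add: cantor_expansion_iff_series\<close>)
  define y where "y = real_of_int (F 0) + suminf (cantor_term Q F)"
  have digits_x: "cantor_digits Q x = E" by (rule cantor_digits_eqI[OF Q x])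
  have digits_y: "cantor_digits Q y = F"
    unfolding y_def by (rule cantor_digits_eqI[OF Q admissible_digits_expansion[OF Q F]])
  have "natural_density_zero {n. cantor_digits Q x n \<noteq> cantor_digits Q y n}"
    by (rule natural_density_zero_subset[OF sparse_runs_density_zero])
      (auto simp: digits_x digits_y F_def)
  moreover have "\<not> Q_normal_of_order Q j y" if "1 \<le> j" for j
    by (rule zero_runs_not_normal[OF Q T _ that]) (simp add: digits_y F_def)
  ultimately show ?thesis by blast
qed

end
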